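(* Let $\Omega\subsetneq\mathbb{C}$ be a domain and let $w\in\Omega$ be such that $\mathcal{H}^0_w(\Omega,\mathbb{D})\neq\emptyset$. Then the maximum $\max\{|h'(w)| : h\in\mathcal{H}^0_w(\Omega,\mathbb{D})\}$ exists and $$\mathscr{C}_{\Omega}^{\mathbb{D}}(w)=2\max\{|h'(w)| : h\in\mathcal{H}^0_w(\Omega,\mathbb{D})\}.$$
   Context: $\mathbb{D}=\{z\in\mathbb{C}:|z|<1\}$. For domains $\Omega\subset\mathbb{C}$, $Y\subsetneq\mathbb{C}$, and points $w\in\Omega$, $s\in Y$, let $\mathcal{H}^s_w(\Omega,Y)$ be the set of holomorphic maps $h:\Omega\to Y$ with $h(w)=s$ and $h(z)\neq s$ for all $z\in\Omega\setminus\{w\}$. For a domain $Y\subsetneq\mathbb{C}$ and $v\in Y$, the Hurwitz density is $\eta_Y(v)=2/r_Y(v)$, where $r_Y(v)=\max\{h'(0): h:\mathbb{D}\to Y \text{ holomorphic},\ h(0)=v,\ h(z)\neq v \text{ for } z\in\mathbb{D}\setminus\{0\},\ h'(0)>0\}$ (in particular $\eta_{\mathbb{D}}(0)=2$). The Carathéodory density of the Hurwitz metric of $\Omega$ relative to $Y$ at base point $s$ is $\mathscr{C}_{\Omega}^{Y,s}(w)=\sup\{\eta_Y(h(w))|h'(w)| : h\in\mathcal{H}^s_w(\Omega,Y)\}$ (defined to be $0$ if $\mathcal{H}^s_w(\Omega,Y)=\emptyset$), and $\mathscr{C}_{\Omega}^{\mathbb{D}}:=\mathscr{C}_{\Omega}^{\mathbb{D},0}$.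 *)

theory Defs
  imports "HOL-Complex_Analysis.Complex_Analysis"
begin

definition is_domain :: "complex set \<Rightarrow> bool" where
  "is_domain S \<longleftrightarrow> open S \<and> connected S \<and> S \<noteq> {}"

definition Hclass :: "complex set \<Rightarrow> complex set \<Rightarrow> complex \<Rightarrow> complex \<Rightarrow> (complex \<Rightarrow> complex) set" where
  "Hclass \<Omega> Y w s = {h. h holomorphic_on \<Omega> \<and> h ` \<Omega> \<subseteq> Y \<and> h w = s \<and>
                          (\<forall>z\<in>\<Omega> - {w}. h z \<noteq> s)}"

text \<open>Hurwitz radius r_Y(v): the extremal value of h'(0) over h in H^v_0(D,Y) with h'(0) > 0.
  The paper writes max; we take the supremum (which is the max when attained).\<close>
definition hurwitz_radius :: "complex set \<Rightarrow> complex \<Rightarrow> real" where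
  "hurwitz_radius Y v = Sup {Re (deriv h 0) | h. h \<in> Hclass (ball 0 1) Y 0 v \<and>
                               deriv h 0 \<in> \<real> \<and> Re (deriv h 0) > 0}"

definition hurwitz_density :: "complex set \<Rightarrow> complex \<Rightarrow> real" where
  "hurwitz_density Y v = 2 / hurwitz_radius Y v"

definition cara_hurwitz :: "complex set \<Rightarrow> complex set \<Rightarrow> complex \<Rightarrow> complex \<Rightarrow> real" where
  "cara_hurwitz \<Omega> Y s w =
     (if Hclass \<Omega> Y w s = {} then 0
      else Sup {hurwitz_density Y (h w) * norm (deriv h w) | h. h \<in> Hclass \<Omega> Y w s})"

end

theory Submission
  imports Defs
begin

text \<open>
  Every \<open>h \<in> H\<^sup>0\<^sub>w(\<Omega>, \<bbbD>)\<close> is bounded by 1, so Cauchy's estimate bounds \<open>|h'(w)|\<close> uniformly.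
  By Montel's theorem a maximising sequence has a locally uniformly convergent subsequence,
  whose limit \<open>g\<close> attains the supremum \<open>M\<close> of \<open>|h'(w)|\<close>. If \<open>M = 0\<close> every member of the class
  is extremal. Otherwise \<open>g\<close> is not constant: Hurwitz's theorem keeps \<open>g\<close> zero-free on
  \<open>\<Omega> - {w}\<close> and the open mapping theorem keeps \<open>g(\<Omega>)\<close> inside the open disc, so \<open>g\<close> belongs
  to the class. Finally the Schwarz lemma gives \<open>\<eta>\<^sub>\<bbbD>(0) = 2\<close>, so the Caratheodory density
  is the maximum of \<open>2 |h'(w)|\<close>.
\<close>

lemma hurwitz_radius_disc_0: "hurwitz_radius (ball 0 1) 0 = 1"
proof -
  let ?A = "{Re (deriv h 0) | h. h \<in> Hclass (ball 0 1) (ball 0 1) 0 0 \<and>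
                               deriv h 0 \<in> \<real> \<and> Re (deriv h 0) > 0}"
  have "(\<lambda>z. z) \<in> Hclass (ball 0 1) (ball 0 1) 0 0"
    by (auto simp: Hclass_def)
  then have "1 \<in> ?A"
    by force
  moreover have "x \<le> 1" if "x \<in> ?A" for x
  proof -
    from that obtain h where h: "h \<in> Hclass (ball 0 1) (ball 0 1) 0 0" and x: "x = Re (deriv h 0)"
      by blast
    have "norm (deriv h 0) \<le> 1"
      using h by (intro Schwarz_Lemma(2)[of h 0]) (auto simp: Hclass_def image_subset_iff)
    then show ?thesis
      using x complex_Re_le_cmod order_trans by blast
  qed
  ultimately show ?thesis
    unfolding hurwitz_radius_def by (intro cSup_eq_maximum) auto
qed

lemma hurwitz_density_disc_0: "hurwitz_density (ball 0 1) 0 = 2"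
  by (simp add: hurwitz_density_def hurwitz_radius_disc_0)

lemma norm_deriv_le_of_bounded:
  assumes "f holomorphic_on S" "cball w r \<subseteq> S" "0 < r" "\<And>z. z \<in> S \<Longrightarrow> norm (f z) \<le> B"
  shows "norm (deriv f w) \<le> B / r"
proof -
  have "norm ((deriv ^^ 1) f w) \<le> fact 1 * B / r ^ 1"
  proof (rule Cauchy_inequality)
    show "f holomorphic_on ball w r"
      using assms(1,2) ball_subset_cball holomorphic_on_subset by blast
    show "continuous_on (cball w r) f"
      using assms(1,2) holomorphic_on_imp_continuous_on continuous_on_subset by blast
    show "norm (f z) \<le> B" if "norm (w - z) = r" for z
      using that assms(2,4) by (auto simp: dist_norm)
  qed (use assms in auto)
  then show ?thesis
    by simp
qed

lemma constant_on_open_delete: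
  fixes g :: "'a::{perfect_space,t2_space} \<Rightarrow> 'b::t2_space"
  assumes "open S" "isCont g w" "g constant_on (S - {w})"
  shows "g constant_on S"
proof -
  obtain c where c: "\<And>z. z \<in> S - {w} \<Longrightarrow> g z = c"
    using assms(3) by (auto simp: constant_on_def)
  have "g w = c" if "w \<in> S"
  proof (rule tendsto_unique)
    show "(g \<longlongrightarrow> g w) (at w)"
      using assms(2) by (rule isContD)
    have "\<forall>\<^sub>F z in at w. g z = c"
      using eventually_at_in_open[OF assms(1) that] by (rule eventually_mono) (rule c)
    then show "(g \<longlongrightarrow> c) (at w)"
      by (rule tendsto_eventually)
  qed simp
  then show ?thesis
    using c unfolding constant_on_def by (metis Diff_iff singletonD)
qed

lemma nonconstant_limit_maps_into_ball:
  assumes "g holomorphic_on S" "open S" "connected S" "\<not> g constant_on S"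
    and lim: "\<And>z. z \<in> S \<Longrightarrow> (\<lambda>n. f n z) \<longlonglongrightarrow> g z"
    and into: "\<And>n z. z \<in> S \<Longrightarrow> f n z \<in> ball c r"
  shows "g ` S \<subseteq> ball c r"
proof -
  have "g z \<in> cball c r" if "z \<in> S" for z
  proof -
    have "dist c (g z) \<le> r"
    proof (rule Lim_bounded)
      show "(\<lambda>n. dist c (f n z)) \<longlonglongrightarrow> dist c (g z)"
        using lim[OF that] by (intro tendsto_intros)
      show "\<forall>n\<ge>0. dist c (f n z) \<le> r"
        using into[OF that] by (simp add: less_imp_le)
    qed
    then show ?thesis
      by simp
  qed
  moreover have "open (g ` S)"
    using assms(1-4) by (intro open_mapping_thm[of g S]) auto
  ultimately have "g ` S \<subseteq> interior (cball c r)"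
    by (intro interior_maximal) auto
  then show ?thesis
    by simp
qed

lemma Hclass_disc_locally_uniform_limit:
  assumes "open \<Omega>" "connected \<Omega>" "w \<in> \<Omega>"
    and f: "\<And>n. f n \<in> Hclass \<Omega> (ball 0 1) w 0"
    and g: "g holomorphic_on \<Omega>"
    and lim: "\<And>K. compact K \<Longrightarrow> K \<subseteq> \<Omega> \<Longrightarrow> uniform_limit K f g sequentially"
    and "deriv g w \<noteq> 0"
  shows "g \<in> Hclass \<Omega> (ball 0 1) w 0"
proof -
  have gw: "(g has_field_derivative deriv g w) (at w)"
    using g assms(1,3) holomorphic_derivI by blast
  have nonconst: "\<not> g constant_on \<Omega>"
    using nonzero_deriv_nonconstant[OF gw assms(1,3)] assms(7) .
  have pointwise: "(\<lambda>n. f n z) \<longlonglongrightarrow> g z" if "z \<in> \<Omega>" for z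
    using tendsto_uniform_limitI[OF lim[of "{z}"]] that by simp
  have "g w = 0"
    using pointwise[OF assms(3)] f by (simp add: Hclass_def LIMSEQ_const_iff)
  moreover have "g z \<noteq> 0" if "z \<in> \<Omega> - {w}" for z
  proof (rule Hurwitz_no_zeros[of "\<Omega> - {w}" f g])
    show "connected (\<Omega> - {w})"
      using connected_open_delete[OF assms(1,2)] by simp
    show "\<not> g constant_on \<Omega> - {w}"
      using constant_on_open_delete[OF assms(1) DERIV_isCont[OF gw]] nonconst by blast
    show "uniform_limit K f g sequentially" if "compact K" "K \<subseteq> \<Omega> - {w}" for K
      using lim that by blast
  qed (use assms that in \<open>auto simp: Hclass_def intro: holomorphic_on_subset\<close>)
  moreover have "g ` \<Omega> \<subseteq> ball 0 1"
    using f by (intro nonconstant_limit_maps_into_ball[OF g assms(1,2) nonconst pointwise])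
      (auto simp: Hclass_def image_subset_iff)
  ultimately show ?thesis
    using g by (auto simp: Hclass_def)
qed

lemma maximizing_sequence:
  fixes f :: "'a \<Rightarrow> real"
  assumes "A \<noteq> {}" "bdd_above (f ` A)"
  obtains x where "\<And>n. x n \<in> A" "(\<lambda>n. f (x n)) \<longlonglongrightarrow> (SUP a\<in>A. f a)"
proof -
  have "(SUP a\<in>A. f a) \<in> closure (f ` A)"
    using assms by (intro closure_contains_Sup) auto
  then obtain y where y: "\<And>n. y n \<in> f ` A" "y \<longlonglongrightarrow> (SUP a\<in>A. f a)"
    unfolding closure_sequential by blast
  have "\<forall>n. \<exists>a\<in>A. y n = f a"
    using y(1) by blast
  then obtain x where x: "\<And>n. x n \<in> A" "\<And>n. y n = f (x n)"
    by metis
  then have "y = (\<lambda>n. f (x n))"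
    by auto
  with y(2) have "(\<lambda>n. f (x n)) \<longlonglongrightarrow> (SUP a\<in>A. f a)"
    by simp
  with x(1) show ?thesis
    by (rule that)
qed

lemma Montel_deriv:
  fixes f :: "nat \<Rightarrow> complex \<Rightarrow> complex"
  assumes "open S" "\<And>n. f n holomorphic_on S" "\<And>n z. z \<in> S \<Longrightarrow> norm (f n z) \<le> B"
  obtains g r where "g holomorphic_on S" "strict_mono (r :: nat \<Rightarrow> nat)"
    "\<And>K. compact K \<Longrightarrow> K \<subseteq> S \<Longrightarrow> uniform_limit K (f \<circ> r) g sequentially"
    "\<And>z. z \<in> S \<Longrightarrow> (\<lambda>n. deriv (f (r n)) z) \<longlonglongrightarrow> deriv g z"
proof -
  have hol: "h holomorphic_on S" if "h \<in> range f" for h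
    using that assms(2) by auto
  have bounded: "\<exists>B. \<forall>h\<in>range f. \<forall>z\<in>K. norm (h z) \<le> B" if "compact K" "K \<subseteq> S" for K
  proof (intro exI ballI)
    fix h z
    assume "h \<in> range f" "z \<in> K"
    then show "norm (h z) \<le> B"
      using assms(3) that(2) by auto
  qed
  obtain g r where g: "g holomorphic_on S" "strict_mono (r :: nat \<Rightarrow> nat)"
    and "\<And>z. z \<in> S \<Longrightarrow> (\<lambda>n. f (r n) z) \<longlonglongrightarrow> g z"
    and lim: "\<And>K. compact K \<Longrightarrow> K \<subseteq> S \<Longrightarrow> uniform_limit K (f \<circ> r) g sequentially"
    by (rule Montel[OF assms(1) hol bounded order_refl]) (assumption | rule that)+
  have "(\<lambda>n. deriv ((f \<circ> r) n) z) \<longlonglongrightarrow> deriv g z" if z: "z \<in> S" for z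
  proof -
    obtain \<rho> where \<rho>: "0 < \<rho>" "cball z \<rho> \<subseteq> S"
      using open_contains_cball assms(1) z by blast
    then have "ball z \<rho> \<subseteq> S"
      by (meson ball_subset_cball order_trans)
    then have "(f \<circ> r) n holomorphic_on ball z \<rho>" for n
      unfolding o_apply by (rule holomorphic_on_subset[OF assms(2)])
    then show ?thesis
      using uniform_limit_on_subset[OF lim[OF compact_cball \<rho>(2)] ball_subset_cball] \<rho>(1)
      by (intro deriv_complex_uniform_limit[where A = "ball z \<rho>"] always_eventually allI) (auto simp: o_def)
  qed
  with g lim show ?thesis
    by (intro that) (simp_all add: o_def)
qed

lemma Hclass_disc_norm_deriv_bdd_above:
  assumes "open \<Omega>" "w \<in> \<Omega>"
  shows "bdd_above ((\<lambda>h. norm (deriv h w)) ` Hclass \<Omega> (ball 0 1) w 0)"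
proof -
  obtain \<rho> where \<rho>: "0 < \<rho>" "cball w \<rho> \<subseteq> \<Omega>"
    using open_contains_cball assms by blast
  have "norm (deriv h w) \<le> 1 / \<rho>" if "h \<in> Hclass \<Omega> (ball 0 1) w 0" for h
  proof (rule norm_deriv_le_of_bounded[OF _ \<rho>(2,1)])
    show "h holomorphic_on \<Omega>" "\<And>z. z \<in> \<Omega> \<Longrightarrow> norm (h z) \<le> 1"
      using that by (auto simp: Hclass_def image_subset_iff less_imp_le)
  qed
  then show ?thesis
    by (rule bdd_aboveI2)
qed

lemma Hclass_disc_has_max_deriv:
  assumes "open \<Omega>" "connected \<Omega>" "w \<in> \<Omega>" "Hclass \<Omega> (ball 0 1) w 0 \<noteq> {}"
  obtains h where "h \<in> Hclass \<Omega> (ball 0 1) w 0"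
    "\<And>k. k \<in> Hclass \<Omega> (ball 0 1) w 0 \<Longrightarrow> norm (deriv k w) \<le> norm (deriv h w)"
proof -
  define H where "H = Hclass \<Omega> (ball 0 1) w 0"
  define M where "M = (SUP h\<in>H. norm (deriv h w))"
  have hol: "\<And>h. h \<in> H \<Longrightarrow> h holomorphic_on \<Omega>"
    and bounded: "\<And>h z. h \<in> H \<Longrightarrow> z \<in> \<Omega> \<Longrightarrow> norm (h z) \<le> 1"
    by (auto simp: H_def Hclass_def image_subset_iff less_imp_le)
  have bdd: "bdd_above ((\<lambda>h. norm (deriv h w)) ` H)"
    unfolding H_def using assms(1,3) by (rule Hclass_disc_norm_deriv_bdd_above)
  have le_M: "norm (deriv k w) \<le> M" if "k \<in> H" for k
    unfolding M_def using that bdd by (rule cSUP_upper)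
  have "H \<noteq> {}"
    using assms(4) by (simp add: H_def)
  then obtain hs where hs: "\<And>n. hs n \<in> H" and hs_M: "(\<lambda>n. norm (deriv (hs n) w)) \<longlonglongrightarrow> M"
    using bdd unfolding M_def by (rule maximizing_sequence) blast
  obtain g r where g: "g holomorphic_on \<Omega>" "strict_mono (r :: nat \<Rightarrow> nat)"
    and lim: "\<And>K. compact K \<Longrightarrow> K \<subseteq> \<Omega> \<Longrightarrow> uniform_limit K (hs \<circ> r) g sequentially"
    and deriv_lim: "\<And>z. z \<in> \<Omega> \<Longrightarrow> (\<lambda>n. deriv (hs (r n)) z) \<longlonglongrightarrow> deriv g z"
    by (rule Montel_deriv[OF assms(1) hol[OF hs] bounded[OF hs]]) (assumption | rule that)+
  have "(\<lambda>n. norm (deriv (hs (r n)) w)) \<longlonglongrightarrow> M"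
    using LIMSEQ_subseq_LIMSEQ[OF hs_M g(2)] by (simp add: o_def)
  with tendsto_norm[OF deriv_lim[OF assms(3)]] have g_M: "norm (deriv g w) = M"
    by (rule LIMSEQ_unique)
  show ?thesis
  proof (cases "deriv g w = 0")
    case True
    then have "norm (deriv k w) \<le> norm (deriv (hs 0) w)" if "k \<in> H" for k
      using le_M[OF that] g_M by simp
    with hs show ?thesis
      unfolding H_def by (rule that)
  next
    case False
    have "g \<in> H"
      unfolding H_def using hs False
      by (intro Hclass_disc_locally_uniform_limit[OF assms(1-3) _ g(1) lim]) (simp_all add: H_def)
    moreover have "norm (deriv k w) \<le> norm (deriv g w)" if "k \<in> H" for k
      using le_M[OF that] g_M by simp
    ultimately show ?thesis
      unfolding H_def by (rule that)
  qed
qed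

lemma cara_hurwitz_disc_eq_max:
  assumes "h \<in> Hclass \<Omega> (ball 0 1) w 0"
    and "\<And>k. k \<in> Hclass \<Omega> (ball 0 1) w 0 \<Longrightarrow> norm (deriv k w) \<le> norm (deriv h w)"
  shows "cara_hurwitz \<Omega> (ball 0 1) 0 w = 2 * norm (deriv h w)"
proof -
  let ?H = "Hclass \<Omega> (ball 0 1) w 0"
  have "?H \<noteq> {}"
    using assms(1) by blast
  then have "cara_hurwitz \<Omega> (ball 0 1) 0 w
               = Sup {hurwitz_density (ball 0 1) (k w) * norm (deriv k w) | k. k \<in> ?H}"
    by (simp add: cara_hurwitz_def)
  also have "\<dots> = Sup ((\<lambda>k. 2 * norm (deriv k w)) ` ?H)"
    unfolding Setcompr_eq_image
    by (intro arg_cong[where f = Sup] image_cong refl) (simp add: Hclass_def hurwitz_density_disc_0)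
  also have "\<dots> = 2 * norm (deriv h w)"
    using assms by (intro cSup_eq_maximum) auto
  finally show ?thesis .
qed

theorem proposition3p3:
  fixes \<Omega> :: "complex set" and w :: complex
  assumes "is_domain \<Omega>" and "\<Omega> \<noteq> UNIV" and "w \<in> \<Omega>"
    and "Hclass \<Omega> (ball 0 1) w 0 \<noteq> {}"
  shows "\<exists>m. m \<in> {norm (deriv h w) | h. h \<in> Hclass \<Omega> (ball 0 1) w 0}
            \<and> (\<forall>h \<in> Hclass \<Omega> (ball 0 1) w 0. norm (deriv h w) \<le> m)
            \<and> cara_hurwitz \<Omega> (ball 0 1) 0 w = 2 * m"
proof -
  have "open \<Omega>" "connected \<Omega>"
    using assms(1) by (auto simp: is_domain_def)
  then obtain h where h: "h \<in> Hclass \<Omega> (ball 0 1) w 0"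
    "\<And>k. k \<in> Hclass \<Omega> (ball 0 1) w 0 \<Longrightarrow> norm (deriv k w) \<le> norm (deriv h w)"
    using Hclass_disc_has_max_deriv assms(3,4) by metis
  show ?thesis
  proof (intro exI conjI)
    show "norm (deriv h w) \<in> {norm (deriv h w) | h. h \<in> Hclass \<Omega> (ball 0 1) w 0}"
      using h(1) by blast
    show "\<forall>k \<in> Hclass \<Omega> (ball 0 1) w 0. norm (deriv k w) \<le> norm (deriv h w)"
      using h(2) by blast
    show "cara_hurwitz \<Omega> (ball 0 1) 0 w = 2 * norm (deriv h w)"
      using h by (rule cara_hurwitz_disc_eq_max)
  qed
qed

end
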